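(* Fix $k\ge1$, an index $1\le i\le k$, and constants $a,b,c\ge0$. For each $n$ let $(X_1,\dots,X_k)$ be an interval partition of $[n]$ and let $\phi$ be a labeling of the pairs of $[n]$ as described in the context. If $|X_{i-1}|=(a+o(1))n$, $|X_i|=(b+o(1))n$ and $|X_{i+1}|=(c+o(1))n$ as $n\to\infty$, then the number of bad triples $u<v<w$ with $v\in X_i$ is $\left[(a+b)b(b+c)+o(1)\right]\binom{n}{3}$.
   Context: An interval partition $(X_1,\dots,X_k)$ of $[n]$ is a sequence of disjoint (possibly empty) intervals of $[n]$ with union $[n]$ and $X_p<X_q$ (every element of $X_p$ below every element of $X_q$) for $p<q$; by convention $X_0=X_{k+1}=\emptyset$. For $u\in X_p$, the fractional index of $u$ in $X_p$ is $\lambda_u=(u+1-\min X_p)/|X_p|\in(0,1]$. The labeling $\phi$ of pairs $u<v$ with $u\in X_p$, $v\in X_q$ is defined by: if $p=q$ then $\phi(uv)=p$; if $q-p\ge2$ then $\phi(uv)$ is some integer with $p<\phi(uv)<q$; if $q=p+1$ then $\phi(uv)=p$ when $\lambda_u+\lambda_v\le1$ and $\phi(uv)=p+1$ when $\lambda_u+\lambda_v>1$. A triple $u<v<w$ is good if $\phi(uv)<\phi(vw)$ and bad otherwise. *)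

theory Defs
  imports Complex_Main
begin

definition is_interval_nat :: "nat set \<Rightarrow> bool" where
  "is_interval_nat S \<longleftrightarrow> (\<forall>x\<in>S. \<forall>y\<in>S. \<forall>z. x \<le> z \<and> z \<le> y \<longrightarrow> z \<in> S)"

text \<open>An interval partition (X 1, ..., X k) of [n] = {1..n}; the function X is
  extended by the convention X p = {} for p outside {1..k} (so X 0 = X (k+1) = {}).\<close>
definition interval_partition :: "nat \<Rightarrow> nat \<Rightarrow> (nat \<Rightarrow> nat set) \<Rightarrow> bool" where
  "interval_partition n k X \<longleftrightarrow>
     (\<forall>p. p \<notin> {1..k} \<longrightarrow> X p = {}) \<and>
     (\<forall>p\<in>{1..k}. is_interval_nat (X p)) \<and>
     (\<forall>p\<in>{1..k}. \<forall>q\<in>{1..k}. p \<noteq> q \<longrightarrow> X p \<inter> X q = {}) \<and>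
     (\<Union>p\<in>{1..k}. X p) = {1..n} \<and>
     (\<forall>p\<in>{1..k}. \<forall>q\<in>{1..k}. p < q \<longrightarrow> (\<forall>x\<in>X p. \<forall>y\<in>X q. x < y))"

definition part_idx :: "nat \<Rightarrow> (nat \<Rightarrow> nat set) \<Rightarrow> nat \<Rightarrow> nat" where
  "part_idx k X u = (THE p. p \<in> {1..k} \<and> u \<in> X p)"

definition frac_idx :: "nat \<Rightarrow> (nat \<Rightarrow> nat set) \<Rightarrow> nat \<Rightarrow> real" where
  "frac_idx k X u =
     (let P = X (part_idx k X u) in (real u + 1 - real (Min P)) / real (card P))"

definition valid_labeling :: "nat \<Rightarrow> nat \<Rightarrow> (nat \<Rightarrow> nat set) \<Rightarrow> (nat \<Rightarrow> nat \<Rightarrow> nat) \<Rightarrow> bool" where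
  "valid_labeling n k X \<phi> \<longleftrightarrow>
     (\<forall>u v. 1 \<le> u \<and> u < v \<and> v \<le> n \<longrightarrow>
        (let p = part_idx k X u; q = part_idx k X v in
          (p = q \<longrightarrow> \<phi> u v = p) \<and>
          (p + 2 \<le> q \<longrightarrow> p < \<phi> u v \<and> \<phi> u v < q) \<and>
          (q = p + 1 \<longrightarrow>
             \<phi> u v = (if frac_idx k X u + frac_idx k X v \<le> 1 then p else p + 1))))"

definition bad_triples :: "nat \<Rightarrow> (nat \<Rightarrow> nat set) \<Rightarrow> (nat \<Rightarrow> nat \<Rightarrow> nat) \<Rightarrow> nat \<Rightarrow> (nat \<times> nat \<times> nat) set" where
  "bad_triples n X \<phi> i =
     {(u, v, w). 1 \<le> u \<and> u < v \<and> v < w \<and> w \<le> n \<and> v \<in> X i \<and> \<not> (\<phi> u v < \<phi> v w)}"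

end

theory Submission
  imports Defs
begin

(* For v in X_i, every u < v lies in a part X_p with p <= i and every w > v in a part X_q
   with q >= i, so phi(uv) <= i <= phi(vw), and (u, v, w) is bad iff both labels equal i.
   Write A, B, C for the sizes of X_(i-1), X_i, X_(i+1) and t for the fractional index of v.
   The admissible u are the elements of X_i below v and those of X_(i-1) with index > 1 - t:
   t (A + B) of them up to an error below 1. The admissible w are the elements of X_i above v
   and those of X_(i+1) with index <= 1 - t: (1 - t) (B + C) of them up to an error below 1.
   Summing t (1 - t) (A + B) (B + C) over t = 1/B, ..., B/B gives (A + B) B (B + C) / 6 up to
   O(n^2), while (n choose 3) ~ n^3 / 6. *)

lemma card_rank_fraction_le:
  fixes \<theta> :: real
  assumes "0 \<le> \<theta>" "\<theta> \<le> 1"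
  shows "card {u \<in> {m..<m + A}. real (u + 1 - m) / real A \<le> \<theta>} = nat \<lfloor>real A * \<theta>\<rfloor>"
proof (cases "A = 0")
  case False
  define K where "K = nat \<lfloor>real A * \<theta>\<rfloor>"
  have "real A * \<theta> \<le> real A" using assms by (simp add: mult_left_le)
  then have "K \<le> A" unfolding K_def by linarith
  have "real (u + 1 - m) / real A \<le> \<theta> \<longleftrightarrow> u + 1 - m \<le> K" for u
    using False assms by (simp add: K_def divide_le_eq mult.commute le_nat_iff le_floor_iff)
  then have "{u \<in> {m..<m + A}. real (u + 1 - m) / real A \<le> \<theta>} = {u \<in> {m..<m + A}. u + 1 - m \<le> K}"
    by blast
  also have "\<dots> = {m..<m + K}" using \<open>K \<le> A\<close> by auto
  finally show ?thesis unfolding K_def[symmetric] by simp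
qed simp

lemma real_nat_floor_bounds:
  fixes x :: real
  assumes "0 \<le> x"
  shows "x - 1 < real (nat \<lfloor>x\<rfloor>)" "real (nat \<lfloor>x\<rfloor>) \<le> x"
  using assms by (simp_all add: of_nat_nat)

lemma mult_approx_bounds:
  fixes x y x' y' :: real
  assumes "0 \<le> x" "x \<le> x'" "x' - 1 \<le> x" "0 \<le> y" "y \<le> y'" "y' - 1 \<le> y"
  shows "0 \<le> x' * y' - x * y" "x' * y' - x * y \<le> x' + y'"
proof -
  have split: "x' * y' - x * y = x' * (y' - y) + y * (x' - x)" by (simp add: algebra_simps)
  have "0 \<le> x' * (y' - y)" "0 \<le> y * (x' - x)" using assms by simp_all
  then show "0 \<le> x' * y' - x * y" using split by linarith
  have "x' * (y' - y) \<le> x' * 1" "y * (x' - x) \<le> y' * 1"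
    using assms by (intro mult_mono; simp)+
  then show "x' * y' - x * y \<le> x' + y'" using split by linarith
qed

lemma sum_mult_complement: "(\<Sum>j=1..n. real j * (real n - real j)) = (real n ^ 3 - real n) / 6"
proof (induction n)
  case (Suc n)
  have gauss: "(\<Sum>j=1..n. real j) = real n * (real n + 1) / 2"
    using double_gauss_sum_from_Suc_0[where 'a=real, of n] by simp
  have "(\<Sum>j=1..Suc n. real j * (real (Suc n) - real j)) = (\<Sum>j=1..n. real j * (real n - real j) + real j)"
    by (simp add: algebra_simps)
  also have "\<dots> = (real n ^ 3 - real n) / 6 + real n * (real n + 1) / 2"
    unfolding sum.distrib Suc.IH gauss ..
  finally show ?case by (simp add: field_simps power3_eq_cube)
qed simp

locale interval_partitioned =
  fixes n k :: nat and X :: "nat \<Rightarrow> nat set"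
  assumes interval_partition: "interval_partition n k X"
begin

lemma part_empty: "p \<notin> {1..k} \<Longrightarrow> X p = {}"
  using interval_partition unfolding interval_partition_def by (elim conjE) blast

lemma Union_parts: "(\<Union>p\<in>{1..k}. X p) = {1..n}"
  using interval_partition unfolding interval_partition_def by (elim conjE)

lemma part_subset: "X p \<subseteq> {1..n}"
  using Union_parts part_empty by (cases "p \<in> {1..k}") auto

lemma part_memD: "u \<in> X p \<Longrightarrow> 1 \<le> u \<and> u \<le> n"
  using part_subset by fastforce

lemma finite_part [simp]: "finite (X p)"
  using part_subset finite_subset by blast

lemma parts_disjoint: "p \<noteq> q \<Longrightarrow> X p \<inter> X q = {}"
proof (cases "p \<in> {1..k} \<and> q \<in> {1..k}")
  case True
  moreover have "\<forall>p\<in>{1..k}. \<forall>q\<in>{1..k}. p \<noteq> q \<longrightarrow> X p \<inter> X q = {}"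
    using interval_partition unfolding interval_partition_def by (elim conjE)
  ultimately show "p \<noteq> q \<Longrightarrow> ?thesis" by blast
qed (use part_empty in auto)

lemma part_idx_eq: "u \<in> X p \<Longrightarrow> part_idx k X u = p"
  unfolding part_idx_def using part_empty parts_disjoint by (intro the_equality) blast+

lemma ex_part: "u \<in> {1..n} \<Longrightarrow> \<exists>p. u \<in> X p"
  using Union_parts by blast

lemma part_less: "u \<in> X p \<Longrightarrow> v \<in> X q \<Longrightarrow> p < q \<Longrightarrow> u < v"
proof -
  assume uv: "u \<in> X p" "v \<in> X q" "p < q"
  have "\<forall>p\<in>{1..k}. \<forall>q\<in>{1..k}. p < q \<longrightarrow> (\<forall>x\<in>X p. \<forall>y\<in>X q. x < y)"
    using interval_partition unfolding interval_partition_def by (elim conjE)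
  moreover have "p \<in> {1..k}" "q \<in> {1..k}" using uv part_empty by blast+
  ultimately show ?thesis using uv by blast
qed

lemma part_mono: "u \<in> X p \<Longrightarrow> v \<in> X q \<Longrightarrow> u < v \<Longrightarrow> p \<le> q"
  using part_less[of v q u p] by fastforce

lemma card_parts_le: "p \<noteq> q \<Longrightarrow> card (X p) + card (X q) \<le> n"
proof -
  assume "p \<noteq> q"
  then have "card (X p) + card (X q) = card (X p \<union> X q)"
    using parts_disjoint by (simp add: card_Un_disjoint)
  also have "\<dots> \<le> card {1..n}"
    using part_subset by (intro card_mono) auto
  finally show ?thesis by simp
qed

lemma part_eq_atLeastLessThan: "X p = {Min (X p)..<Min (X p) + card (X p)}"
proof (cases "X p = {}")
  case False
  then have "p \<in> {1..k}" using part_empty by blast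
  then have convex: "is_interval_nat (X p)"
    using interval_partition by (simp add: interval_partition_def)
  have ends: "Min (X p) \<in> X p" "Max (X p) \<in> X p" using False by simp_all
  have range: "X p = {Min (X p)..Max (X p)}"
  proof (intro set_eqI iffI)
    fix x assume "x \<in> {Min (X p)..Max (X p)}"
    then have "Min (X p) \<le> x" "x \<le> Max (X p)" by simp_all
    then show "x \<in> X p" using convex ends unfolding is_interval_nat_def by blast
  qed (simp add: Min_le Max_ge)
  have "card (X p) = Max (X p) + 1 - Min (X p)" by (subst range) simp
  moreover have "Min (X p) \<le> Max (X p)" using False by simp
  ultimately show ?thesis by (subst range) auto
qed simp

lemma frac_idx_eq:
  assumes "u \<in> X p"
  shows "frac_idx k X u = real (u + 1 - Min (X p)) / real (card (X p))"
proof -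
  have "Min (X p) \<le> u" using assms by simp
  then show ?thesis by (simp add: frac_idx_def Let_def part_idx_eq[OF assms] of_nat_diff)
qed

lemma part_interval:
  obtains m B where "X p = {m..<m + B}" "card (X p) = B"
    "\<And>u. u \<in> X p \<Longrightarrow> frac_idx k X u = real (u + 1 - m) / real B"
  using part_eq_atLeastLessThan frac_idx_eq by blast

lemma frac_idx_bounds: "u \<in> X p \<Longrightarrow> 0 \<le> frac_idx k X u \<and> frac_idx k X u \<le> 1"
  by (rule part_interval[of p]) auto

lemma card_frac_idx_le:
  assumes "0 \<le> \<theta>" "\<theta> \<le> 1"
  shows "card {u \<in> X p. frac_idx k X u \<le> \<theta>} = nat \<lfloor>real (card (X p)) * \<theta>\<rfloor>"
proof (rule part_interval[of p])
  fix m B assume Xp: "X p = {m..<m + B}" "card (X p) = B"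
    and frac: "\<And>u. u \<in> X p \<Longrightarrow> frac_idx k X u = real (u + 1 - m) / real B"
  have "{u \<in> X p. frac_idx k X u \<le> \<theta>} = {u \<in> {m..<m + B}. real (u + 1 - m) / real B \<le> \<theta>}"
    using frac Xp(1) by auto
  then show ?thesis using card_rank_fraction_le[OF assms] Xp(2) by simp
qed

lemma card_frac_idx_gt:
  assumes "0 \<le> \<theta>" "\<theta> \<le> 1"
  shows "card {u \<in> X p. \<theta> < frac_idx k X u} = card (X p) - nat \<lfloor>real (card (X p)) * \<theta>\<rfloor>"
proof -
  have "{u \<in> X p. \<theta> < frac_idx k X u} = X p - {u \<in> X p. frac_idx k X u \<le> \<theta>}" by auto
  then show ?thesis by (simp add: card_Diff_subset card_frac_idx_le[OF assms])
qed

lemma card_part_less: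
  "v \<in> X p \<Longrightarrow> real (card {u \<in> X p. u < v}) = real (card (X p)) * frac_idx k X v - 1"
proof (rule part_interval[of p])
  fix m B assume Xp: "X p = {m..<m + B}" "card (X p) = B"
    and frac: "\<And>u. u \<in> X p \<Longrightarrow> frac_idx k X u = real (u + 1 - m) / real B"
  assume v: "v \<in> X p"
  then have "{u \<in> X p. u < v} = {m..<v}" using Xp(1) by auto
  then show ?thesis using v Xp frac[OF v] by (simp add: of_nat_diff)
qed

lemma card_part_greater:
  "v \<in> X p \<Longrightarrow> real (card {w \<in> X p. v < w}) = real (card (X p)) * (1 - frac_idx k X v)"
proof (rule part_interval[of p])
  fix m B assume Xp: "X p = {m..<m + B}" "card (X p) = B"
    and frac: "\<And>u. u \<in> X p \<Longrightarrow> frac_idx k X u = real (u + 1 - m) / real B"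
  assume v: "v \<in> X p"
  then have "{w \<in> X p. v < w} = {v + 1..<m + B}" using Xp(1) by auto
  moreover have "0 < B" using v Xp(1) by auto
  ultimately show ?thesis using v Xp frac[OF v] by (simp add: of_nat_diff field_simps)
qed

(* Also true for an empty part, where both sides are 0 because x / 0 = 0. *)
lemma sum_frac_idx_mult_complement:
  "(\<Sum>v\<in>X p. frac_idx k X v * (1 - frac_idx k X v)) =
     (real (card (X p)) ^ 2 - 1) / (6 * real (card (X p)))"
proof (rule part_interval[of p])
  fix m B assume Xp: "X p = {m..<m + B}" "card (X p) = B"
    and frac: "\<And>u. u \<in> X p \<Longrightarrow> frac_idx k X u = real (u + 1 - m) / real B"
  define g where "g j = real j / real B * (1 - real j / real B)" for j
  have "(\<Sum>v\<in>X p. frac_idx k X v * (1 - frac_idx k X v)) = (\<Sum>v\<in>{m..<m + B}. g (v + 1 - m))"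
    using frac Xp(1) by (simp add: g_def)
  also have "\<dots> = (\<Sum>j=1..B. g j)"
    by (rule sum.reindex_bij_witness[of _ "\<lambda>j. j + m - 1" "\<lambda>v. v + 1 - m"]) auto
  also have "\<dots> = (\<Sum>j=1..B. real j * (real B - real j)) / real B ^ 2"
    by (cases "B = 0") (simp_all add: g_def sum_divide_distrib field_simps power2_eq_square)
  also have "\<dots> = (real B ^ 2 - 1) / (6 * real B)"
    unfolding sum_mult_complement
    by (cases "B = 0") (simp_all add: field_simps power2_eq_square power3_eq_cube)
  finally show ?thesis using Xp(2) by simp
qed

end

locale labelled_partition = interval_partitioned +
  fixes \<phi> :: "nat \<Rightarrow> nat \<Rightarrow> nat" and i :: nat
  assumes valid_labeling: "valid_labeling n k X \<phi>"
    and i_bounds: "1 \<le> i" "i \<le> k"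
begin

lemma valid_labelingD:
  assumes "1 \<le> u" "u < v" "v \<le> n" "u \<in> X p" "v \<in> X q"
  shows "p = q \<Longrightarrow> \<phi> u v = p"
    and "p + 2 \<le> q \<Longrightarrow> p < \<phi> u v \<and> \<phi> u v < q"
    and "q = p + 1 \<Longrightarrow> \<phi> u v = (if frac_idx k X u + frac_idx k X v \<le> 1 then p else p + 1)"
proof -
  have "let p = part_idx k X u; q = part_idx k X v in
          (p = q \<longrightarrow> \<phi> u v = p) \<and>
          (p + 2 \<le> q \<longrightarrow> p < \<phi> u v \<and> \<phi> u v < q) \<and>
          (q = p + 1 \<longrightarrow> \<phi> u v = (if frac_idx k X u + frac_idx k X v \<le> 1 then p else p + 1))"
    using valid_labeling assms(1-3) unfolding valid_labeling_def by blast
  then show "p = q \<Longrightarrow> \<phi> u v = p"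
    and "p + 2 \<le> q \<Longrightarrow> p < \<phi> u v \<and> \<phi> u v < q"
    and "q = p + 1 \<Longrightarrow> \<phi> u v = (if frac_idx k X u + frac_idx k X v \<le> 1 then p else p + 1)"
    unfolding Let_def part_idx_eq[OF assms(4)] part_idx_eq[OF assms(5)] by auto
qed

definition left_partners :: "nat \<Rightarrow> nat set" where
  "left_partners v = {u \<in> X i. u < v} \<union> {u \<in> X (i - 1). 1 < frac_idx k X u + frac_idx k X v}"

definition right_partners :: "nat \<Rightarrow> nat set" where
  "right_partners v = {w \<in> X i. v < w} \<union> {w \<in> X (i + 1). frac_idx k X v + frac_idx k X w \<le> 1}"

lemma label_left:
  assumes "1 \<le> u" "u < v" "v \<in> X i"
  shows "\<phi> u v \<le> i \<and> (\<phi> u v = i \<longleftrightarrow> u \<in> left_partners v)"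
proof -
  have "v \<le> n" using part_memD assms(3) by blast
  then obtain p where u: "u \<in> X p" using ex_part assms(1,2) by fastforce
  note label = valid_labelingD[OF assms(1,2) \<open>v \<le> n\<close> u assms(3)]
  have "p \<le> i" using part_mono[OF u assms(3,2)] .
  then consider "p = i" | "p + 1 = i" | "p + 2 \<le> i" by linarith
  then show ?thesis
  proof cases
    case 1
    then show ?thesis using label u assms(2) by (simp add: left_partners_def)
  next
    case 2
    then have "u \<notin> X i" "i - 1 = p" using u parts_disjoint[of p i] by auto
    then show ?thesis using label u 2 by (auto simp: left_partners_def)
  next
    case 3
    then have "p \<noteq> i" "p \<noteq> i - 1" by auto
    then have "u \<notin> X i" "u \<notin> X (i - 1)"
      using u parts_disjoint[of p i] parts_disjoint[of p "i - 1"] by auto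
    then show ?thesis using label 3 by (auto simp: left_partners_def)
  qed
qed

lemma label_right:
  assumes "v < w" "w \<le> n" "v \<in> X i"
  shows "i \<le> \<phi> v w \<and> (\<phi> v w = i \<longleftrightarrow> w \<in> right_partners v)"
proof -
  have "1 \<le> v" using part_memD assms(3) by blast
  then obtain q where w: "w \<in> X q" using ex_part assms(1,2) by fastforce
  note label = valid_labelingD[OF \<open>1 \<le> v\<close> assms(1,2,3) w]
  have "i \<le> q" using part_mono[OF assms(3) w assms(1)] .
  then consider "q = i" | "q = i + 1" | "i + 2 \<le> q" by linarith
  then show ?thesis
  proof cases
    case 1
    then show ?thesis using label w assms(1) by (simp add: right_partners_def)
  next
    case 2
    then have "w \<notin> X i" using w parts_disjoint[of q i] by auto
    then show ?thesis using label w 2 by (auto simp: right_partners_def)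
  next
    case 3
    then have "w \<notin> X i" "w \<notin> X (i + 1)"
      using w parts_disjoint[of q i] parts_disjoint[of q "i + 1"] by auto
    then show ?thesis using label 3 by (auto simp: right_partners_def)
  qed
qed

lemma left_partnersD:
  assumes "u \<in> left_partners v" "v \<in> X i"
  shows "1 \<le> u" "u < v"
proof -
  have "u \<in> X i \<or> u \<in> X (i - 1)" using assms(1) by (auto simp: left_partners_def)
  then show "1 \<le> u" using part_memD by blast
  have "i - 1 < i" using i_bounds by simp
  then show "u < v" using assms part_less[of u "i - 1" v i] by (auto simp: left_partners_def)
qed

lemma right_partnersD:
  assumes "w \<in> right_partners v" "v \<in> X i"
  shows "v < w" "w \<le> n"
proof -
  have "w \<in> X i \<or> w \<in> X (i + 1)" using assms(1) by (auto simp: right_partners_def)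
  then show "w \<le> n" using part_memD by blast
  show "v < w" using assms part_less[of v i w "i + 1"] by (auto simp: right_partners_def)
qed

lemma bad_triples_eq_Sigma:
  "bad_triples n X \<phi> i = (\<lambda>(v, u, w). (u, v, w)) ` (SIGMA v:X i. left_partners v \<times> right_partners v)"
proof (intro set_eqI iffI)
  fix t assume "t \<in> bad_triples n X \<phi> i"
  then obtain u v w where t: "t = (u, v, w)" and uvw: "1 \<le> u" "u < v" "v < w" "w \<le> n" "v \<in> X i"
    and bad: "\<not> \<phi> u v < \<phi> v w" unfolding bad_triples_def by auto
  have "u \<in> left_partners v" "w \<in> right_partners v"
    using label_left[OF uvw(1,2,5)] label_right[OF uvw(3,4,5)] bad by auto
  then show "t \<in> (\<lambda>(v, u, w). (u, v, w)) ` (SIGMA v:X i. left_partners v \<times> right_partners v)"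
    using t uvw(5) by force
next
  fix t assume "t \<in> (\<lambda>(v, u, w). (u, v, w)) ` (SIGMA v:X i. left_partners v \<times> right_partners v)"
  then obtain u v w where t: "t = (u, v, w)" and v: "v \<in> X i"
    and partners: "u \<in> left_partners v" "w \<in> right_partners v" by auto
  note u = left_partnersD[OF partners(1) v] and w = right_partnersD[OF partners(2) v]
  have "\<phi> u v = i" "\<phi> v w = i"
    using label_left[OF u v] label_right[OF w v] partners by auto
  then show "t \<in> bad_triples n X \<phi> i" using t u w v by (auto simp: bad_triples_def)
qed

lemma card_bad_triples:
  "card (bad_triples n X \<phi> i) = (\<Sum>v\<in>X i. card (left_partners v) * card (right_partners v))"
proof -
  have "inj_on (\<lambda>(v, u, w). (u, v, w)) (SIGMA v:X i. left_partners v \<times> right_partners v)"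
    by (auto simp: inj_on_def)
  moreover have "finite (left_partners v)" "finite (right_partners v)" for v
    by (simp_all add: left_partners_def right_partners_def)
  ultimately show ?thesis by (simp add: bad_triples_eq_Sigma card_image card_cartesian_product)
qed

lemma card_left_partners_bounds:
  assumes v: "v \<in> X i"
  defines "t \<equiv> frac_idx k X v"
  defines "s \<equiv> t * (real (card (X (i - 1))) + real (card (X i)))"
  shows "s - 1 \<le> real (card (left_partners v))" "real (card (left_partners v)) \<le> s"
proof -
  define A where "A = card (X (i - 1))"
  define F where "F = nat \<lfloor>real A * (1 - t)\<rfloor>"
  have t: "0 \<le> t" "t \<le> 1" using frac_idx_bounds[OF v] by (simp_all add: t_def)
  have F: "real A * (1 - t) - 1 < real F" "real F \<le> real A * (1 - t)"
    unfolding F_def using t by (simp_all add: real_nat_floor_bounds)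
  moreover have "real A * (1 - t) \<le> real A" using t by (simp add: mult_left_le)
  ultimately have "F \<le> A" by linarith
  have "i \<noteq> i - 1" using i_bounds by simp
  then have "card (left_partners v) = card {u \<in> X i. u < v} + card {u \<in> X (i - 1). 1 - t < frac_idx k X u}"
    unfolding left_partners_def t_def using parts_disjoint
    by (subst card_Un_disjoint) (auto intro!: arg_cong[where f = card])
  also have "\<dots> = card {u \<in> X i. u < v} + (A - F)"
    using t by (simp add: card_frac_idx_gt A_def F_def)
  finally have "real (card (left_partners v)) = real (card (X i)) * t - 1 + real A - real F"
    using card_part_less[OF v] \<open>F \<le> A\<close> by (simp add: t_def of_nat_diff)
  then show "s - 1 \<le> real (card (left_partners v))" "real (card (left_partners v)) \<le> s"
    using F unfolding s_def A_def by (simp_all add: algebra_simps)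
qed

lemma card_right_partners_bounds:
  assumes v: "v \<in> X i"
  defines "t \<equiv> frac_idx k X v"
  defines "s \<equiv> (1 - t) * (real (card (X i)) + real (card (X (i + 1))))"
  shows "s - 1 \<le> real (card (right_partners v))" "real (card (right_partners v)) \<le> s"
proof -
  define C where "C = card (X (i + 1))"
  define F where "F = nat \<lfloor>real C * (1 - t)\<rfloor>"
  have t: "0 \<le> t" "t \<le> 1" using frac_idx_bounds[OF v] by (simp_all add: t_def)
  have F: "real C * (1 - t) - 1 < real F" "real F \<le> real C * (1 - t)"
    unfolding F_def using t by (simp_all add: real_nat_floor_bounds)
  have "card (right_partners v) = card {w \<in> X i. v < w} + card {w \<in> X (i + 1). frac_idx k X w \<le> 1 - t}"
    unfolding right_partners_def t_def using parts_disjoint[of i "i + 1"]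
    by (subst card_Un_disjoint) (auto intro!: arg_cong[where f = card])
  also have "\<dots> = card {w \<in> X i. v < w} + F"
    using t by (simp add: card_frac_idx_le C_def F_def)
  finally have "real (card (right_partners v)) = real (card (X i)) * (1 - t) + real F"
    using card_part_greater[OF v] by (simp add: t_def)
  then show "s - 1 \<le> real (card (right_partners v))" "real (card (right_partners v)) \<le> s"
    using F unfolding s_def C_def by (simp_all add: algebra_simps)
qed

lemma card_parts_around_le:
  "real (card (X (i - 1))) + real (card (X i)) \<le> real n"
  "real (card (X i)) + real (card (X (i + 1))) \<le> real n"
  using card_parts_le[of "i - 1" i] card_parts_le[of i "i + 1"] i_bounds
  by (simp_all flip: of_nat_add)

lemma partner_product_approx:
  assumes v: "v \<in> X i"
  defines "t \<equiv> frac_idx k X v"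
  defines "P \<equiv> t * (real (card (X (i - 1))) + real (card (X i))) *
               ((1 - t) * (real (card (X i)) + real (card (X (i + 1)))))"
  defines "N \<equiv> real (card (left_partners v)) * real (card (right_partners v))"
  shows "0 \<le> P - N" "P - N \<le> real n"
proof -
  define A B C where "A = real (card (X (i - 1)))" and "B = real (card (X i))"
    and "C = real (card (X (i + 1)))"
  have t: "0 \<le> t" "t \<le> 1" using frac_idx_bounds[OF v] by (simp_all add: t_def)
  have "0 \<le> P - N" "P - N \<le> t * (A + B) + (1 - t) * (B + C)"
    using mult_approx_bounds card_left_partners_bounds[OF v] card_right_partners_bounds[OF v]
    unfolding P_def N_def t_def A_def B_def C_def by simp_all
  moreover have "t * (A + B) + (1 - t) * (B + C) \<le> t * real n + (1 - t) * real n"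
    using t card_parts_around_le unfolding A_def B_def C_def by (intro add_mono mult_left_mono) auto
  ultimately show "0 \<le> P - N" "P - N \<le> real n" by (simp_all add: algebra_simps)
qed

lemma bad_triples_estimate:
  defines "A \<equiv> real (card (X (i - 1)))" and "B \<equiv> real (card (X i))" and "C \<equiv> real (card (X (i + 1)))"
  shows "\<bar>real (card (bad_triples n X \<phi> i)) - (A + B) * B * (B + C) / 6\<bar> \<le> 2 * real n ^ 2"
proof -
  define P where "P v = frac_idx k X v * (A + B) * ((1 - frac_idx k X v) * (B + C))" for v
  define N where "N v = real (card (left_partners v)) * real (card (right_partners v))" for v
  have AB: "A + B \<le> real n" and BC: "B + C \<le> real n"
    using card_parts_around_le unfolding A_def B_def C_def by simp_all
  have "(\<Sum>v\<in>X i. P v) = (A + B) * (B + C) * (\<Sum>v\<in>X i. frac_idx k X v * (1 - frac_idx k X v))"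
    unfolding P_def sum_distrib_left by (simp add: algebra_simps)
  also have "\<dots> = (A + B) * (B + C) * (B ^ 2 - 1) / (6 * B)"
    by (simp add: sum_frac_idx_mult_complement B_def)
  finally have main_term: "(A + B) * B * (B + C) / 6 - (\<Sum>v\<in>X i. P v) = (A + B) * (B + C) / (6 * B)"
    by (cases "B = 0") (simp_all add: field_simps power2_eq_square)
  have "(A + B) * (B + C) / (6 * B) \<le> real n ^ 2"
  proof (cases "B = 0")
    case False
    then have "1 \<le> B" by (simp add: B_def Suc_le_eq card_gt_0_iff)
    moreover have "0 \<le> (A + B) * (B + C)" by (simp add: A_def B_def C_def)
    ultimately have "(A + B) * (B + C) / (6 * B) \<le> (A + B) * (B + C)"
      by (simp add: divide_le_eq mult_le_cancel_left1)
    also have "\<dots> \<le> real n ^ 2"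
      using AB BC by (simp add: power2_eq_square mult_mono A_def B_def C_def)
    finally show ?thesis .
  qed simp
  moreover have "0 \<le> (A + B) * (B + C) / (6 * B)" by (simp add: A_def B_def C_def)
  moreover have "0 \<le> (\<Sum>v\<in>X i. P v - N v)" "(\<Sum>v\<in>X i. P v - N v) \<le> B * real n"
    using partner_product_approx sum_mono[of "X i" "\<lambda>v. P v - N v" "\<lambda>_. real n"]
    by (auto simp: P_def N_def A_def B_def C_def intro: sum_nonneg)
  moreover have "B * real n \<le> real n ^ 2"
    using BC by (simp add: power2_eq_square mult_right_mono C_def)
  moreover have "real (card (bad_triples n X \<phi> i)) = (\<Sum>v\<in>X i. N v)"
    by (simp add: card_bad_triples N_def)
  ultimately show ?thesis using main_term by (simp add: sum_subtractf abs_le_iff)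
qed

end

lemma real_choose_three: "real (n choose 3) = real n * (real n - 1) * (real n - 2) / 6"
  by (simp add: binomial_gbinomial gbinomial_prod_rev numeral_3_eq_3 numeral_2_eq_2)

lemma cube_over_choose_three: "(\<lambda>n. real n ^ 3 / (6 * real (n choose 3))) \<longlonglongrightarrow> 1"
proof -
  have "(\<lambda>n. 1 / ((1 - 1 / real n) * (1 - 2 / real n))) \<longlonglongrightarrow> 1 / ((1 - 0) * (1 - 0))"
    by (intro tendsto_intros lim_const_over_n) auto
  moreover have "1 / ((1 - 1 / real n) * (1 - 2 / real n)) = real n ^ 3 / (6 * real (n choose 3))"
    if "n \<ge> 3" for n
  proof -
    have "real n \<noteq> 0" "real n - 1 \<noteq> 0" "real n - 2 \<noteq> 0" using that by auto
    moreover from this have "1 - 1 / real n = (real n - 1) / real n" "1 - 2 / real n = (real n - 2) / real n"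
      by (simp_all add: field_simps)
    ultimately show ?thesis by (simp add: real_choose_three power3_eq_cube)
  qed
  then have "\<forall>\<^sub>F n in sequentially.
      1 / ((1 - 1 / real n) * (1 - 2 / real n)) = real n ^ 3 / (6 * real (n choose 3))"
    unfolding eventually_sequentially by blast
  ultimately show ?thesis by (simp add: Lim_transform_eventually)
qed

lemma tendsto_over_choose_three:
  fixes S M :: "nat \<Rightarrow> real"
  assumes approx: "\<And>n. \<bar>S n - M n\<bar> \<le> K * real n ^ 2"
    and limit: "(\<lambda>n. 6 * M n / real n ^ 3) \<longlonglongrightarrow> L"
  shows "(\<lambda>n. S n / real (n choose 3)) \<longlonglongrightarrow> L"
proof -
  have "norm (6 * (S n - M n) / real n ^ 3) \<le> norm (1 / real n) * (6 * K)" if "n \<ge> 1" for n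
  proof -
    have "norm (6 * (S n - M n) / real n ^ 3) = 6 * \<bar>S n - M n\<bar> / real n ^ 3"
      unfolding real_norm_def abs_divide abs_mult by simp
    also have "\<dots> \<le> 6 * (K * real n ^ 2) / real n ^ 3"
      using approx by (intro divide_right_mono) auto
    also have "\<dots> = norm (1 / real n) * (6 * K)"
      using that by (simp add: field_simps power2_eq_square power3_eq_cube)
    finally show ?thesis .
  qed
  then have "\<forall>\<^sub>F n in sequentially. norm (6 * (S n - M n) / real n ^ 3) \<le> norm (1 / real n) * (6 * K)"
    unfolding eventually_sequentially by blast
  then have "(\<lambda>n. 6 * (S n - M n) / real n ^ 3) \<longlonglongrightarrow> 0"
    by (rule tendsto_0_le[OF lim_const_over_n])
  from tendsto_add[OF limit this] have "(\<lambda>n. 6 * S n / real n ^ 3) \<longlonglongrightarrow> L"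
    by (simp add: add_divide_distrib[symmetric] algebra_simps)
  moreover have "6 * S n / real n ^ 3 * (real n ^ 3 / (6 * real (n choose 3))) = S n / real (n choose 3)" for n
    by (cases "n = 0"; cases "n choose 3 = 0") (simp_all add: field_simps)
  ultimately show ?thesis using tendsto_mult[OF _ cube_over_choose_three] by fastforce
qed

theorem lemma4p4:
  fixes k i :: nat and a b c :: real
    and X :: "nat \<Rightarrow> nat \<Rightarrow> nat set" and \<phi> :: "nat \<Rightarrow> nat \<Rightarrow> nat \<Rightarrow> nat"
  assumes "k \<ge> 1" and "1 \<le> i" and "i \<le> k"
    and "a \<ge> 0" and "b \<ge> 0" and "c \<ge> 0"
    and "\<forall>n. interval_partition n k (X n)"
    and "\<forall>n. valid_labeling n k (X n) (\<phi> n)"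
    and "(\<lambda>n. real (card (X n (i - 1))) / real n) \<longlonglongrightarrow> a"
    and "(\<lambda>n. real (card (X n i)) / real n) \<longlonglongrightarrow> b"
    and "(\<lambda>n. real (card (X n (i + 1))) / real n) \<longlonglongrightarrow> c"
  shows "(\<lambda>n. real (card (bad_triples n (X n) (\<phi> n) i)) / real (n choose 3))
           \<longlonglongrightarrow> (a + b) * b * (b + c)"
proof -
  define A where "A n = real (card (X n (i - 1)))" for n
  define B where "B n = real (card (X n i))" for n
  define C where "C n = real (card (X n (i + 1)))" for n
  have estimate: "\<bar>real (card (bad_triples n (X n) (\<phi> n) i)) - (A n + B n) * B n * (B n + C n) / 6\<bar>
      \<le> 2 * real n ^ 2" for n
  proof -
    interpret labelled_partition n k "X n" "\<phi> n" i
      using assms by unfold_locales auto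
    show ?thesis unfolding A_def B_def C_def by (rule bad_triples_estimate)
  qed
  have scaling: "6 * ((A n + B n) * B n * (B n + C n) / 6) / real n ^ 3 =
      (A n / real n + B n / real n) * (B n / real n) * (B n / real n + C n / real n)" for n
    by (cases "n = 0") (simp_all add: field_simps power3_eq_cube)
  have "(\<lambda>n. (A n / real n + B n / real n) * (B n / real n) * (B n / real n + C n / real n))
      \<longlonglongrightarrow> (a + b) * b * (b + c)"
    using assms(9-11) unfolding A_def B_def C_def by (intro tendsto_intros)
  then show ?thesis
    unfolding scaling[symmetric] by (rule tendsto_over_choose_three[OF estimate])
qed

end
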